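(* Let $R$ be an integral domain, $n\ge 2$, and let $a_1,\dots,a_n,c\in R$. Then \[ \det V(a_1,\dots,a_n)=\det V(a_1-c,a_2-c,\dots,a_n-c), \] where $V$ denotes the Vieta matrix.
   Context: For elements $b_1,\dots,b_m$ of a commutative ring and an integer $j\ge 0$, let $e_j(b_1,\dots,b_m)$ denote the $j$-th elementary symmetric polynomial, i.e. $e_0=1$ and $e_j(b_1,\dots,b_m)=\sum_{1\le l_1<\dots<l_j\le m} b_{l_1}\cdots b_{l_j}$ for $1\le j\le m$. The Vieta matrix $V(a_1,\dots,a_n)$ of $a_1,\dots,a_n$ is the $n\times n$ matrix whose entry in row $j+1$ and column $i$ (for $j=0,1,\dots,n-1$ and $i=1,\dots,n$) is $e_j(a_1,\dots,a_{i-1},a_{i+1},\dots,a_n)$, the $j$-th elementary symmetric polynomial of the $n-1$ elements obtained by omitting $a_i$. *)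

theory Defs
  imports "Jordan_Normal_Form.Determinant"
begin

definition elem_sym :: "nat \<Rightarrow> (nat \<Rightarrow> 'a::comm_ring_1) \<Rightarrow> nat set \<Rightarrow> 'a" where
  "elem_sym j b S = (\<Sum>T\<in>{T. T \<subseteq> S \<and> card T = j}. \<Prod>l\<in>T. b l)"

definition vieta_matrix :: "nat \<Rightarrow> (nat \<Rightarrow> 'a::comm_ring_1) \<Rightarrow> 'a mat" where
  "vieta_matrix n a = mat n n (\<lambda>(j, i). elem_sym j a ({0..<n} - {i}))"

end

theory Submission
  imports Defs
begin

text \<open>Expanding each product \<open>\<Prod>l\<in>T. (b l - c)\<close> and regrouping by the subset \<open>U \<subseteq> T\<close> of
  unshifted factors shows that \<open>e\<^sub>j(b - c)\<close> on an \<open>m\<close>-element set is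
  \<open>\<Sum>\<^sub>k\<^sub>\<le>\<^sub>j (m-k choose j-k) (-c)\<^sup>j\<^sup>-\<^sup>k e\<^sub>k(b)\<close>. The coefficients depend only on \<open>m = n - 1\<close>, not on
  the omitted index, so \<open>V(a - c) = L V(a)\<close> for a lower unitriangular matrix \<open>L\<close>, and
  \<open>det L = 1\<close>.\<close>

lemma card_supersets_of_card:
  assumes "finite S" "U \<subseteq> S"
  shows "card {T. T \<subseteq> S \<and> card T = j \<and> U \<subseteq> T} =
    (if card U \<le> j then (card S - card U) choose (j - card U) else 0)"
proof (cases "card U \<le> j")
  case True
  have "finite U" using assms finite_subset by blast
  have "{T. T \<subseteq> S \<and> card T = j \<and> U \<subseteq> T} = (\<lambda>V. V \<union> U) ` {V. V \<subseteq> S - U \<and> card V = j - card U}"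
  proof (rule Set.set_eqI, rule iffI)
    fix T assume T: "T \<in> {T. T \<subseteq> S \<and> card T = j \<and> U \<subseteq> T}"
    then have "card (T - U) = j - card U" "T = (T - U) \<union> U"
      using \<open>finite U\<close> by (auto simp: card_Diff_subset)
    with T show "T \<in> (\<lambda>V. V \<union> U) ` {V. V \<subseteq> S - U \<and> card V = j - card U}" by blast
  next
    fix T assume "T \<in> (\<lambda>V. V \<union> U) ` {V. V \<subseteq> S - U \<and> card V = j - card U}"
    then obtain V where V: "V \<subseteq> S - U" "card V = j - card U" "T = V \<union> U" by blast
    moreover have "finite V" using V(1) assms(1) finite_subset by blast
    moreover have "V \<inter> U = {}" using V(1) by blast
    ultimately have "card T = card V + card U"
      using V(3) \<open>finite U\<close> by (simp add: card_Un_disjoint)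
    with V True assms show "T \<in> {T. T \<subseteq> S \<and> card T = j \<and> U \<subseteq> T}" by auto
  qed
  moreover have "inj_on (\<lambda>V. V \<union> U) {V. V \<subseteq> S - U \<and> card V = j - card U}"
    by (rule inj_onI) blast
  ultimately have "card {T. T \<subseteq> S \<and> card T = j \<and> U \<subseteq> T} = card (S - U) choose (j - card U)"
    using assms by (simp add: card_image n_subsets)
  with True assms \<open>finite U\<close> show ?thesis by (simp add: card_Diff_subset)
next
  case False
  have no_supersets: "{T. T \<subseteq> S \<and> card T = j \<and> U \<subseteq> T} = {}"
    using False assms by (auto dest: card_mono[OF finite_subset])
  show ?thesis unfolding no_supersets using False by simp
qed

lemma prod_diff_const_expand:
  fixes b :: "nat \<Rightarrow> 'a::comm_ring_1"
  assumes "finite T"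
  shows "(\<Prod>l\<in>T. b l - c) = (\<Sum>U\<in>Pow T. (\<Prod>l\<in>U. b l) * (- c) ^ (card T - card U))"
proof -
  have "(\<Prod>l\<in>T. b l - c) = (\<Sum>U\<in>Pow T. (\<Prod>l\<in>U. b l) * (\<Prod>l\<in>T - U. - c))"
    using prod_add[OF assms, of b "\<lambda>_. - c"] by simp
  also have "\<dots> = (\<Sum>U\<in>Pow T. (\<Prod>l\<in>U. b l) * (- c) ^ (card T - card U))"
    using assms by (intro sum.cong) (auto simp: card_Diff_subset finite_subset)
  finally show ?thesis .
qed

definition shift_coeff :: "'a::comm_ring_1 \<Rightarrow> nat \<Rightarrow> nat \<Rightarrow> nat \<Rightarrow> 'a" where
  "shift_coeff c m j k = (if k \<le> j then of_nat ((m - k) choose (j - k)) * (- c) ^ (j - k) else 0)"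

lemma elem_sym_diff_const:
  fixes b :: "nat \<Rightarrow> 'a::comm_ring_1"
  assumes S: "finite S"
  shows "elem_sym j (\<lambda>l. b l - c) S = (\<Sum>k\<le>card S. shift_coeff c (card S) j k * elem_sym k b S)"
proof -
  let ?A = "{T. T \<subseteq> S \<and> card T = j}"
  let ?g = "\<lambda>U. (\<Prod>l\<in>U. b l) * (- c) ^ (j - card U)"
  have "elem_sym j (\<lambda>l. b l - c) S = (\<Sum>T\<in>?A. \<Sum>U\<in>Pow T. ?g U)"
    unfolding elem_sym_def using S
    by (intro sum.cong refl) (auto simp: prod_diff_const_expand finite_subset)
  also have "\<dots> = (\<Sum>T\<in>?A. \<Sum>U\<in>{U. U \<in> Pow S \<and> U \<subseteq> T}. ?g U)"
    by (intro sum.cong refl) auto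
  also have "\<dots> = (\<Sum>U\<in>Pow S. \<Sum>T\<in>{T. T \<in> ?A \<and> U \<subseteq> T}. ?g U)"
    by (rule sum.swap_restrict) (use S in auto)
  also have "\<dots> = (\<Sum>U\<in>Pow S. shift_coeff c (card S) j (card U) * (\<Prod>l\<in>U. b l))"
    using S by (intro sum.cong refl) (auto simp: conj_assoc card_supersets_of_card shift_coeff_def)
  also have "\<dots> = (\<Sum>k\<le>card S. \<Sum>U\<in>{U. U \<in> Pow S \<and> card U = k}.
      shift_coeff c (card S) j (card U) * (\<Prod>l\<in>U. b l))"
    by (rule sum.group[symmetric]) (use S in \<open>auto intro: card_mono\<close>)
  also have "\<dots> = (\<Sum>k\<le>card S. shift_coeff c (card S) j k * elem_sym k b S)"
    unfolding elem_sym_def sum_distrib_left by (intro sum.cong) auto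
  finally show ?thesis .
qed

definition shift_matrix :: "nat \<Rightarrow> 'a::comm_ring_1 \<Rightarrow> 'a mat" where
  "shift_matrix n c = mat n n (\<lambda>(j, k). shift_coeff c (n - 1) j k)"

lemma vieta_matrix_diff_const:
  fixes a :: "nat \<Rightarrow> 'a::comm_ring_1"
  shows "vieta_matrix n (\<lambda>i. a i - c) = shift_matrix n c * vieta_matrix n a"
proof (rule eq_matI)
  fix j i assume "j < dim_row (shift_matrix n c * vieta_matrix n a)"
    and "i < dim_col (shift_matrix n c * vieta_matrix n a)"
  then have j: "j < n" and i: "i < n" by (auto simp: shift_matrix_def vieta_matrix_def)
  have "vieta_matrix n (\<lambda>i. a i - c) $$ (j, i) = elem_sym j (\<lambda>l. a l - c) ({0..<n} - {i})"
    using j i by (simp add: vieta_matrix_def)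
  also have "\<dots> = (\<Sum>k\<le>n - 1. shift_coeff c (n - 1) j k * elem_sym k a ({0..<n} - {i}))"
    using elem_sym_diff_const[of "{0..<n} - {i}" j a c] i by simp
  also have "\<dots> = (\<Sum>k<n. shift_coeff c (n - 1) j k * elem_sym k a ({0..<n} - {i}))"
    using i by (intro sum.cong) auto
  also have "\<dots> = (shift_matrix n c * vieta_matrix n a) $$ (j, i)"
    using j i by (simp add: shift_matrix_def vieta_matrix_def scalar_prod_def atLeast0LessThan)
  finally show "vieta_matrix n (\<lambda>i. a i - c) $$ (j, i) = (shift_matrix n c * vieta_matrix n a) $$ (j, i)" .
qed (auto simp: shift_matrix_def vieta_matrix_def)

lemma det_shift_matrix: "det (shift_matrix n c) = 1"
proof -
  have "det (shift_matrix n c) = prod_list (diag_mat (shift_matrix n c))"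
    by (rule det_lower_triangular[of n]) (auto simp: shift_matrix_def shift_coeff_def)
  also have "\<dots> = 1"
    by (simp add: prod_list_diag_prod shift_matrix_def shift_coeff_def)
  finally show ?thesis .
qed

lemma det_vieta_matrix_diff_const:
  fixes a :: "nat \<Rightarrow> 'a::comm_ring_1"
  shows "det (vieta_matrix n (\<lambda>i. a i - c)) = det (vieta_matrix n a)"
proof -
  have "shift_matrix n c \<in> carrier_mat n n" "vieta_matrix n a \<in> carrier_mat n n"
    by (simp_all add: shift_matrix_def vieta_matrix_def)
  then show ?thesis by (simp add: vieta_matrix_diff_const det_mult det_shift_matrix)
qed

theorem corollary1:
  fixes a :: "nat \<Rightarrow> 'a::idom" and c :: 'a and n :: nat
  assumes "n \<ge> 2"
  shows "det (vieta_matrix n a) = det (vieta_matrix n (\<lambda>i. a i - c))"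
  by (rule det_vieta_matrix_diff_const[symmetric])

end
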